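(* Let $\mu$ be a probability Borel measure on the unit circle $\mathbb T$ (with infinite support) that is symmetric with respect to complex conjugation, and let $\{\varphi_i\}_{i\ge0}$ be its orthonormal polynomials, $\int_{\mathbb T}\varphi_i\overline{\varphi_j}\,d\mu=\delta_{ij}$, $\deg\varphi_i=i$ with positive leading coefficient (these have real coefficients). Put $\varphi_n^*(z):=z^n\varphi_n(1/z)$, $b_n(z):=\varphi_n(z)/\varphi_n^*(z)$, and $$K_n(z,w)=\sum_{i=0}^{n-1}\varphi_i(z)\overline{\varphi_i(w)},\quad K_n^{(1,0)}(z,w)=\sum_{i=0}^{n-1}\varphi_i'(z)\overline{\varphi_i(w)},\quad K_n^{(1,1)}(z,w)=\sum_{i=0}^{n-1}\varphi_i'(z)\overline{\varphi_i'(w)}.$$ Let $P_n(z)=\sum_{i=0}^{n-1}\eta_i\varphi_i(z)$ with $\eta_0,\dots,\eta_{n-1}$ i.i.d. standard real Gaussian variables, and let $$\rho_n^{(1,0)}(x)=\frac1\pi\frac{\sqrt{K_n(x,x)K_n^{(1,1)}(x,x)-K_n^{(1,0)}(x,x)^2}}{K_n(x,x)},\qquad x\in\mathbb R,$$ be the intensity function of the real zeros of $P_n$. Then for real $x\neq\pm1$, $$\rho_n^{(1,0)}(x)=\frac1\pi\frac{\sqrt{1-h_n^2(x)}}{|1-x^2|},\qquad h_n(x)=\frac{(1-x^2)b_n'(x)}{1-b_n^2(x)}.$$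
   Context: $\rho_n^{(1,0)}$ is the density such that the expected number of real zeros of $P_n$ in a measurable set $E\subset\mathbb R$ equals $\int_E\rho_n^{(1,0)}(x)\,dx$. *)

theory Defs
  imports "HOL-Probability.Probability" "HOL-Computational_Algebra.Polynomial"
begin

definition msupport :: "complex measure \<Rightarrow> complex set" where
  "msupport M = {z. \<forall>e>0. emeasure M (ball z e) > 0}"

text \<open>Reversed polynomial: poly (phistar p) z = z^(degree p) * poly p (1/z) for z nonzero.\<close>
definition phistar :: "complex poly \<Rightarrow> complex poly" where
  "phistar p = reflect_poly p"

definition Kn :: "(nat \<Rightarrow> complex poly) \<Rightarrow> nat \<Rightarrow> complex \<Rightarrow> complex \<Rightarrow> complex" where
  "Kn \<phi> n z w = (\<Sum>i<n. poly (\<phi> i) z * cnj (poly (\<phi> i) w))"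

definition Kn10 :: "(nat \<Rightarrow> complex poly) \<Rightarrow> nat \<Rightarrow> complex \<Rightarrow> complex \<Rightarrow> complex" where
  "Kn10 \<phi> n z w = (\<Sum>i<n. poly (pderiv (\<phi> i)) z * cnj (poly (\<phi> i) w))"

definition Kn11 :: "(nat \<Rightarrow> complex poly) \<Rightarrow> nat \<Rightarrow> complex \<Rightarrow> complex \<Rightarrow> complex" where
  "Kn11 \<phi> n z w = (\<Sum>i<n. poly (pderiv (\<phi> i)) z * cnj (poly (pderiv (\<phi> i)) w))"

text \<open>Kac--Rice intensity of real zeros (values are real since the coefficients are real).\<close>
definition rho10 :: "(nat \<Rightarrow> complex poly) \<Rightarrow> nat \<Rightarrow> real \<Rightarrow> real" where
  "rho10 \<phi> n x =
     (let z = complex_of_real x in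
      1 / pi * sqrt (Re (Kn \<phi> n z z * Kn11 \<phi> n z z - (Kn10 \<phi> n z z)\<^sup>2)) / Re (Kn \<phi> n z z))"

definition bn :: "(nat \<Rightarrow> complex poly) \<Rightarrow> nat \<Rightarrow> complex \<Rightarrow> complex" where
  "bn \<phi> n z = poly (\<phi> n) z / poly (phistar (\<phi> n)) z"

definition hn :: "(nat \<Rightarrow> complex poly) \<Rightarrow> nat \<Rightarrow> real \<Rightarrow> real" where
  "hn \<phi> n x =
     (let z = complex_of_real x in
      Re ((1 - z\<^sup>2) * deriv (bn \<phi> n) z / (1 - (bn \<phi> n z)\<^sup>2)))"

end

theory Submission
  imports Defs "HOL-Computational_Algebra.Fundamental_Theorem_Algebra"
begin

text \<open>
  Symmetry of the measure under conjugation forces the orthonormal polynomials to have real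
  coefficients, and orthogonality then gives the Szego recurrence
  phi_(n+1) = a_n z phi_n + c_n phi_n^* with real a_n, c_n and a_n^2 - c_n^2 = 1.
  By induction this yields the Christoffel-Darboux formula
  (1 - z u) sum_(i<n) phi_i(z) phi_i(u) = phi_n^*(z) phi_n^*(u) - phi_n(z) phi_n(u).
  Differentiating it once in z, once more in u, and putting z = u = x expresses the three kernels
  on the real diagonal through phi_n, phi_n^* and their derivatives; the Kac-Rice density then
  reduces by algebra to the stated expression in b_n = phi_n / phi_n^*.
\<close>

lemma poly_eqI_nonzero:
  fixes p q :: "'a::{idom,ring_char_0} poly"
  assumes "\<And>z. z \<noteq> 0 \<Longrightarrow> poly p z = poly q z"
  shows "p = q"
proof (rule ccontr)
  assume "p \<noteq> q"
  then have "finite {z. poly (p - q) z = 0}" by (intro poly_roots_finite) simp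
  moreover have "UNIV - {0} \<subseteq> {z. poly (p - q) z = 0}" using assms by auto
  ultimately have "finite (UNIV - {0::'a})" by (rule finite_subset[rotated])
  then show False by (simp add: infinite_UNIV_char_0)
qed

lemma reflect_poly_szego_step:
  fixes p q :: "'a::field_char_0 poly"
  assumes "degree q = n" "degree p = Suc n"
    and "p = smult a (pCons 0 q) + smult c (reflect_poly q)"
  shows "reflect_poly p = smult a (reflect_poly q) + smult c (pCons 0 q)"
proof (rule poly_eqI_nonzero)
  fix z :: 'a assume z: "z \<noteq> 0"
  have "poly (reflect_poly p) z = z ^ Suc n * poly p (inverse z)"
    using z assms(2) by (simp add: poly_reflect_poly_nz)
  also have "\<dots> = a * (z ^ n * poly q (inverse z)) + c * z * (z ^ n * inverse z ^ n * poly q z)"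
    using z assms(1) by (simp add: assms(3) poly_reflect_poly_nz field_simps)
  also have "\<dots> = poly (smult a (reflect_poly q) + smult c (pCons 0 q)) z"
    using z assms(1) by (simp add: poly_reflect_poly_nz power_inverse field_simps)
  finally show "poly (reflect_poly p) z = poly (smult a (reflect_poly q) + smult c (pCons 0 q)) z" .
qed

lemma poly_map_poly_of_real:
  "poly (map_poly of_real p) (of_real x) = (of_real (poly p x) :: 'a::real_field)"
  by (induction p) (auto simp: map_poly_pCons)

lemma pderiv_map_poly_of_real:
  "pderiv (map_poly of_real p) = (map_poly of_real (pderiv p) :: 'a::real_field poly)"
  by (intro poly_eqI) (simp add: coeff_pderiv coeff_map_poly)

lemma degree_map_poly_of_real [simp]:
  "degree (map_poly of_real p :: 'a::real_field poly) = degree p"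
  by (intro degree_map_poly) simp

lemma reflect_poly_map_poly_of_real:
  "reflect_poly (map_poly of_real p) = (map_poly of_real (reflect_poly p) :: 'a::real_field poly)"
  by (intro poly_eqI) (simp add: coeff_reflect_poly coeff_map_poly)

lemma map_poly_of_real_inject:
  "(map_poly of_real p = (map_poly of_real q :: 'a::real_field poly)) \<longleftrightarrow> p = q"
  by (simp add: poly_eq_iff coeff_map_poly)

text \<open>Conjugation-free versions of Kn, Kn10 and Kn11: for polynomials with real
  coefficients they agree with those at real points.\<close>

definition cd_kernel :: "(nat \<Rightarrow> 'a::idom poly) \<Rightarrow> nat \<Rightarrow> 'a \<Rightarrow> 'a \<Rightarrow> 'a" where
  "cd_kernel p n z u = (\<Sum>i<n. poly (p i) z * poly (p i) u)"

definition cd_kernel10 :: "(nat \<Rightarrow> 'a::idom poly) \<Rightarrow> nat \<Rightarrow> 'a \<Rightarrow> 'a \<Rightarrow> 'a" where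
  "cd_kernel10 p n z u = (\<Sum>i<n. poly (pderiv (p i)) z * poly (p i) u)"

definition cd_kernel11 :: "(nat \<Rightarrow> 'a::idom poly) \<Rightarrow> nat \<Rightarrow> 'a \<Rightarrow> 'a \<Rightarrow> 'a" where
  "cd_kernel11 p n z u = (\<Sum>i<n. poly (pderiv (p i)) z * poly (pderiv (p i)) u)"

locale szego_sequence =
  fixes p :: "nat \<Rightarrow> 'a::real_normed_field poly" and a c :: "nat \<Rightarrow> 'a"
  assumes degree_p: "degree (p n) = n"
    and recurrence: "p (Suc n) = smult (a n) (pCons 0 (p n)) + smult (c n) (reflect_poly (p n))"
    and coeffs_relation: "a n * a n - c n * c n = 1"
begin

lemma reflect_recurrence:
  "reflect_poly (p (Suc n)) = smult (a n) (reflect_poly (p n)) + smult (c n) (pCons 0 (p n))"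
  by (rule reflect_poly_szego_step[OF degree_p degree_p recurrence])

lemma christoffel_darboux:
  "(1 - z * u) * cd_kernel p n z u =
     poly (reflect_poly (p n)) z * poly (reflect_poly (p n)) u - poly (p n) z * poly (p n) u"
proof (induction n)
  case 0
  obtain k where "p 0 = [:k:]" using degree_p[of 0] by (metis degree0_coeffs)
  then show ?case by (simp add: cd_kernel_def)
next
  case (Suc n)
  define A B where "A w = poly (reflect_poly (p n)) w" and "B w = poly (p n) w" for w
  have "(1 - z * u) * cd_kernel p (Suc n) z u = (1 - z * u) * cd_kernel p n z u + (1 - z * u) * B z * B u"
    by (simp add: cd_kernel_def B_def algebra_simps)
  also have "\<dots> = A z * A u - z * u * B z * B u"
    unfolding Suc.IH by (simp add: A_def B_def algebra_simps)
  also have "\<dots> = (a n * a n - c n * c n) * (A z * A u - z * u * B z * B u)"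
    by (simp add: coeffs_relation)
  also have "\<dots> = (a n * A z + c n * z * B z) * (a n * A u + c n * u * B u)
                  - (a n * z * B z + c n * A z) * (a n * u * B u + c n * A u)"
    by (simp add: algebra_simps)
  also have "\<dots> = poly (reflect_poly (p (Suc n))) z * poly (reflect_poly (p (Suc n))) u
                  - poly (p (Suc n)) z * poly (p (Suc n)) u"
    unfolding reflect_recurrence by (subst (1 2) recurrence) (simp add: A_def B_def algebra_simps)
  finally show ?case .
qed

lemma christoffel_darboux_deriv:
  "- u * cd_kernel p n z u + (1 - z * u) * cd_kernel10 p n z u =
     poly (pderiv (reflect_poly (p n))) z * poly (reflect_poly (p n)) u
     - poly (pderiv (p n)) z * poly (p n) u"
proof (rule DERIV_unique)
  show "((\<lambda>z. (1 - z * u) * cd_kernel p n z u) has_field_derivative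
          - u * cd_kernel p n z u + (1 - z * u) * cd_kernel10 p n z u) (at z)"
    unfolding cd_kernel_def cd_kernel10_def
    by (auto intro!: derivative_eq_intros simp: algebra_simps)
  show "((\<lambda>z. (1 - z * u) * cd_kernel p n z u) has_field_derivative
          poly (pderiv (reflect_poly (p n))) z * poly (reflect_poly (p n)) u
          - poly (pderiv (p n)) z * poly (p n) u) (at z)"
    unfolding christoffel_darboux by (auto intro!: derivative_eq_intros)
qed

lemma christoffel_darboux_deriv2:
  "- cd_kernel p n z u - u * cd_kernel10 p n u z - z * cd_kernel10 p n z u
     + (1 - z * u) * cd_kernel11 p n z u =
     poly (pderiv (reflect_poly (p n))) z * poly (pderiv (reflect_poly (p n))) u
     - poly (pderiv (p n)) z * poly (pderiv (p n)) u"
proof (rule DERIV_unique)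
  let ?f = "\<lambda>u. - u * cd_kernel p n z u + (1 - z * u) * cd_kernel10 p n z u"
  show "(?f has_field_derivative - cd_kernel p n z u - u * cd_kernel10 p n u z
          - z * cd_kernel10 p n z u + (1 - z * u) * cd_kernel11 p n z u) (at u)"
    unfolding cd_kernel_def cd_kernel10_def cd_kernel11_def
    by (auto intro!: derivative_eq_intros simp: algebra_simps)
  show "(?f has_field_derivative
          poly (pderiv (reflect_poly (p n))) z * poly (pderiv (reflect_poly (p n))) u
          - poly (pderiv (p n)) z * poly (pderiv (p n)) u) (at u)"
    unfolding christoffel_darboux_deriv by (auto intro!: derivative_eq_intros)
qed

end

text \<open>The hypotheses are the Christoffel-Darboux identity and its two derivatives at
  z = u = x, with a = phi_n^*(x) and b = phi_n(x). They combine to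
  (1 - x^2)^2 (K K11 - K10^2) = K^2 - T^2 with T = b' a - b a', and h_n(x) = T / K.\<close>

lemma kac_rice_density_identity:
  fixes x K K10 K11 a a' b b' :: real
  assumes cd: "(1 - x * x) * K = a * a - b * b"
    and cd10: "- x * K + (1 - x * x) * K10 = a' * a - b' * b"
    and cd11: "- K - x * K10 - x * K10 + (1 - x * x) * K11 = a' * a' - b' * b'"
    and K: "K > 0" and x: "1 - x * x \<noteq> 0" and a: "a \<noteq> 0"
  shows "1 / pi * sqrt (K * K11 - K10\<^sup>2) / K =
         1 / pi * sqrt (1 - ((1 - x\<^sup>2) * ((b' * a - b * a') / (a * a)) / (1 - (b / a)\<^sup>2))\<^sup>2)
           / \<bar>1 - x\<^sup>2\<bar>"
proof -
  define D T where "D = 1 - x * x" and "T = b' * a - b * a'"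
  have h: "(1 - x\<^sup>2) * ((b' * a - b * a') / (a * a)) / (1 - (b / a)\<^sup>2) = T / K"
  proof -
    have "1 - (b / a)\<^sup>2 = D * K / (a * a)"
      using a cd by (simp add: D_def field_simps power2_eq_square)
    moreover have "1 - x\<^sup>2 = D" by (simp add: D_def power2_eq_square)
    moreover have "D * (T / (a * a)) / (D * K / (a * a)) = T / K"
      using a K x by (simp add: D_def)
    ultimately show ?thesis by (simp add: T_def)
  qed
  have "D\<^sup>2 * (K * K11 - K10\<^sup>2) = K\<^sup>2 - T\<^sup>2"
    using cd cd10 cd11 unfolding D_def T_def by algebra
  moreover have D: "D \<noteq> 0" using x by (simp add: D_def)
  ultimately have "K * K11 - K10\<^sup>2 = (K\<^sup>2 - T\<^sup>2) / D\<^sup>2"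
    by (simp add: field_simps)
  also have "\<dots> = (K / D)\<^sup>2 * (1 - (T / K)\<^sup>2)"
    using K D by (simp add: field_simps)
  finally have "K * K11 - K10\<^sup>2 = (K / D)\<^sup>2 * (1 - (T / K)\<^sup>2)" .
  then have "sqrt (K * K11 - K10\<^sup>2) / K = sqrt (1 - (T / K)\<^sup>2) / \<bar>D\<bar>"
    using K by (simp add: real_sqrt_mult)
  then have "1 / pi * (sqrt (K * K11 - K10\<^sup>2) / K) = 1 / pi * (sqrt (1 - (T / K)\<^sup>2) / \<bar>D\<bar>)"
    by simp
  then show ?thesis
    unfolding h by (simp add: D_def power2_eq_square)
qed

lemma rho10_map_poly_of_real:
  assumes "\<And>i. \<phi> i = map_poly of_real (\<psi> i)"
  shows "rho10 \<phi> n x = 1 / pi * sqrt (cd_kernel \<psi> n x x * cd_kernel11 \<psi> n x x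
           - (cd_kernel10 \<psi> n x x)\<^sup>2) / cd_kernel \<psi> n x x"
proof -
  let ?z = "complex_of_real x"
  have "Kn \<phi> n ?z ?z = of_real (cd_kernel \<psi> n x x)"
    "Kn10 \<phi> n ?z ?z = of_real (cd_kernel10 \<psi> n x x)"
    "Kn11 \<phi> n ?z ?z = of_real (cd_kernel11 \<psi> n x x)"
    by (simp_all add: Kn_def Kn10_def Kn11_def cd_kernel_def cd_kernel10_def cd_kernel11_def
        assms pderiv_map_poly_of_real poly_map_poly_of_real)
  then show ?thesis
    by (simp add: rho10_def Let_def flip: of_real_mult of_real_power of_real_diff)
qed

lemma hn_map_poly_of_real:
  assumes \<phi>: "\<phi> n = map_poly of_real q" and pole: "poly (reflect_poly q) x \<noteq> 0"
  shows "hn \<phi> n x = (1 - x\<^sup>2) *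
           ((poly (pderiv q) x * poly (reflect_poly q) x - poly q x * poly (pderiv (reflect_poly q)) x)
             / (poly (reflect_poly q) x * poly (reflect_poly q) x))
           / (1 - (poly q x / poly (reflect_poly q) x)\<^sup>2)"
proof -
  let ?z = "complex_of_real x" and ?r = "reflect_poly (map_poly of_real q)"
  have "(bn \<phi> n has_field_derivative
          (poly (pderiv (map_poly of_real q)) ?z * poly ?r ?z
            - poly (map_poly of_real q) ?z * poly (pderiv ?r) ?z) / (poly ?r ?z * poly ?r ?z)) (at ?z)"
    unfolding bn_def phistar_def \<phi>
    using pole by (intro DERIV_divide poly_DERIV)
      (simp add: reflect_poly_map_poly_of_real poly_map_poly_of_real)
  from DERIV_imp_deriv[OF this] show ?thesis
    by (simp add: hn_def bn_def phistar_def \<phi> Let_def reflect_poly_map_poly_of_real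
        pderiv_map_poly_of_real poly_map_poly_of_real
        flip: of_real_mult of_real_power of_real_diff of_real_divide)
qed

lemma cd_kernel_pos:
  fixes p :: "nat \<Rightarrow> real poly"
  assumes "n \<ge> 1" and "poly (p 0) x \<noteq> 0"
  shows "cd_kernel p n x x > 0"
proof -
  have "0 < poly (p 0) x * poly (p 0) x"
    using assms(2) by (auto simp: zero_less_mult_iff linorder_neq_iff)
  also have "\<dots> \<le> cd_kernel p n x x"
    unfolding cd_kernel_def using assms(1) by (intro member_le_sum) auto
  finally show ?thesis .
qed

lemma power_mult_cnj_power_circle:
  assumes "norm z = 1"
  shows "z ^ m * cnj z ^ m = 1"
proof -
  have "z * cnj z = 1" using assms by (simp add: complex_norm_square[symmetric])
  then show ?thesis by (metis power_mult_distrib power_one)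
qed

locale opuc =
  fixes M :: "complex measure" and \<phi> :: "nat \<Rightarrow> complex poly"
  assumes prob: "prob_space M"
    and borel: "sets M = sets borel"
    and circle: "emeasure M (sphere 0 1) = 1"
    and symm: "\<And>A. A \<in> sets borel \<Longrightarrow> emeasure M (cnj ` A) = emeasure M A"
    and deg: "\<And>i. degree (\<phi> i) = i"
    and lead: "\<And>i. Im (lead_coeff (\<phi> i)) = 0 \<and> Re (lead_coeff (\<phi> i)) > 0"
    and orth: "\<And>i j. integral\<^sup>L M (\<lambda>z. poly (\<phi> i) z * cnj (poly (\<phi> j) z))
                       = (if i = j then 1 else 0)"
begin

definition ip :: "complex poly \<Rightarrow> complex poly \<Rightarrow> complex" where
  "ip p q = integral\<^sup>L M (\<lambda>z. poly p z * cnj (poly q z))"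

lemma space_M: "space M = UNIV"
  using sets_eq_imp_space_eq[OF borel] by simp

lemma measurable_M: "measurable M N = measurable borel N"
  by (rule measurable_cong_sets[OF borel refl])

lemma AE_norm_eq_1: "AE z in M. norm z = 1"
proof -
  interpret prob_space M by (rule prob)
  have "prob (sphere 0 1) = 1" using circle by (simp add: emeasure_eq_measure)
  then have "AE z in M. z \<in> sphere 0 1" by (rule AE_prob_1)
  then show ?thesis by simp
qed

lemma integral_cong_circle:
  assumes "f \<in> borel_measurable borel" "g \<in> borel_measurable borel"
    and "\<And>z. norm z = 1 \<Longrightarrow> f z = g z"
  shows "integral\<^sup>L M f = integral\<^sup>L M g"
  using assms AE_norm_eq_1 by (intro integral_cong_AE) (auto simp: measurable_M)

lemma integrable_poly_mult_cnj: "integrable M (\<lambda>z. poly p z * cnj (poly q z))"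
proof -
  obtain m1 where m1: "\<forall>z. norm z \<le> 1 \<longrightarrow> norm (poly p z) \<le> m1"
    using poly_bound_exists[of 1 p] by blast
  obtain m2 where m2: "\<forall>z. norm z \<le> 1 \<longrightarrow> norm (poly q z) \<le> m2"
    using poly_bound_exists[of 1 q] by blast
  show ?thesis
  proof (rule integrableI_bounded_set[where A = "sphere 0 1" and B = "m1 * m2"])
    show "AE z in M. z \<in> sphere 0 1 \<longrightarrow> norm (poly p z * cnj (poly q z)) \<le> m1 * m2"
      using m1 m2 by (intro AE_I2) (auto simp: norm_mult intro!: mult_mono')
    show "AE z in M. z \<notin> sphere 0 1 \<longrightarrow> poly p z * cnj (poly q z) = 0"
      using AE_norm_eq_1 by auto
  qed (use borel circle in \<open>auto simp: measurable_M intro!: borel_measurable_continuous_onI continuous_intros\<close>)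
qed

lemma ip_add_left: "ip (p + q) r = ip p r + ip q r"
  unfolding ip_def using integrable_poly_mult_cnj[of p r] integrable_poly_mult_cnj[of q r]
  by (simp add: distrib_right)

lemma ip_diff_left: "ip (p - q) r = ip p r - ip q r"
  unfolding ip_def using integrable_poly_mult_cnj[of p r] integrable_poly_mult_cnj[of q r]
  by (simp add: left_diff_distrib)

lemma ip_smult_left: "ip (smult c p) r = c * ip p r"
  unfolding ip_def by (simp add: mult.assoc)

lemma ip_sum_left: "ip (\<Sum>j\<in>A. f j) r = (\<Sum>j\<in>A. ip (f j) r)"
  by (induction A rule: infinite_finite_induct) (simp_all add: ip_add_left ip_def[of 0])

lemma ip_swap: "ip q p = cnj (ip p q)"
proof -
  have "ip q p = integral\<^sup>L M (\<lambda>z. cnj (poly p z * cnj (poly q z)))"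
    unfolding ip_def by (simp add: mult.commute)
  then show ?thesis unfolding ip_def by (simp only: Bochner_Integration.integral_cnj)
qed

lemma ip_add_right: "ip r (p + q) = ip r p + ip r q"
  by (simp add: ip_swap[of r] ip_add_left)

lemma ip_smult_right: "ip r (smult c p) = cnj c * ip r p"
  by (simp add: ip_swap[of r] ip_smult_left)

lemma ip_sum_right: "ip r (\<Sum>j\<in>A. f j) = (\<Sum>j\<in>A. ip r (f j))"
  by (simp add: ip_swap[of r] ip_sum_left)

lemma ip_phi: "ip (\<phi> i) (\<phi> j) = (if i = j then 1 else 0)"
  unfolding ip_def by (rule orth)

lemma ip_pCons_0: "ip (pCons 0 p) (pCons 0 q) = ip p q"
  unfolding ip_def
proof (rule integral_cong_circle)
  fix z :: complex assume "norm z = 1"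
  then have "z * cnj z = 1" using power_mult_cnj_power_circle[of z 1] by simp
  then show "poly (pCons 0 p) z * cnj (poly (pCons 0 q) z) = poly p z * cnj (poly q z)"
    by (simp add: algebra_simps)
qed (auto intro!: borel_measurable_continuous_onI continuous_intros)

lemma lead_coeff_phi_nonzero: "lead_coeff (\<phi> i) \<noteq> 0"
  using lead[of i] by auto

lemma phi_span: "degree p \<le> m \<Longrightarrow> \<exists>c. p = (\<Sum>j\<le>m. smult (c j) (\<phi> j))"
proof (induction m arbitrary: p)
  case 0
  then obtain a where p: "p = [:a:]" by (metis degree0_coeffs le_zero_eq)
  obtain k where k: "\<phi> 0 = [:k:]" using deg[of 0] by (metis degree0_coeffs)
  have "k \<noteq> 0" using lead_coeff_phi_nonzero[of 0] k by simp
  then have "p = smult (a / k) (\<phi> 0)" using p k by simp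
  then show ?case by (intro exI[of _ "\<lambda>_. a / k"]) simp
next
  case (Suc m)
  define d where "d = coeff p (Suc m) / lead_coeff (\<phi> (Suc m))"
  have "degree (p - smult d (\<phi> (Suc m))) \<le> m"
  proof (rule degree_le, intro allI impI)
    fix i assume "m < i"
    then consider "i = Suc m" | "i > Suc m" by linarith
    then show "coeff (p - smult d (\<phi> (Suc m))) i = 0"
      by cases (use Suc.prems lead_coeff_phi_nonzero[of "Suc m"] in \<open>simp_all add: d_def deg coeff_eq_0\<close>)
  qed
  then obtain c where c: "p - smult d (\<phi> (Suc m)) = (\<Sum>j\<le>m. smult (c j) (\<phi> j))"
    using Suc.IH by blast
  then have "p = (\<Sum>j\<le>Suc m. smult ((c(Suc m := d)) j) (\<phi> j))"
    by (simp add: algebra_simps)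
  then show ?case by blast
qed

lemma phi_expansion: "degree p \<le> m \<Longrightarrow> p = (\<Sum>j\<le>m. smult (ip p (\<phi> j)) (\<phi> j))"
proof -
  assume "degree p \<le> m"
  then obtain c where c: "p = (\<Sum>j\<le>m. smult (c j) (\<phi> j))" using phi_span by blast
  have "ip p (\<phi> k) = c k" if "k \<le> m" for k
    using that by (subst c) (simp add: ip_sum_left ip_smult_left ip_phi if_distrib cong: if_cong)
  then show ?thesis by (subst c) (intro sum.cong refl, simp)
qed

lemma ip_phi_degree_less: "degree q < n \<Longrightarrow> ip (\<phi> n) q = 0"
proof -
  assume q: "degree q < n"
  then have "q = (\<Sum>j\<le>n - 1. smult (ip q (\<phi> j)) (\<phi> j))" by (intro phi_expansion) simp
  then have "ip (\<phi> n) q = (\<Sum>j\<le>n - 1. cnj (ip q (\<phi> j)) * ip (\<phi> n) (\<phi> j))"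
    by (metis (no_types, lifting) ip_smult_right ip_sum_right sum.cong)
  also have "\<dots> = 0" using q by (intro sum.neutral) (auto simp: ip_phi)
  finally show ?thesis .
qed

lemma eq_0_if_orthogonal_monoms:
  assumes "degree s < n" and "\<And>k. k < n \<Longrightarrow> ip s (monom 1 k) = 0"
  shows "s = 0"
proof -
  have "ip s q = 0" if "degree q < n" for q
  proof -
    have "q = (\<Sum>k\<le>n - 1. smult (coeff q k) (monom 1 k))"
      using that by (simp add: smult_monom poly_as_sum_of_monoms')
    then have "ip s q = (\<Sum>k\<le>n - 1. cnj (coeff q k) * ip s (monom 1 k))"
      by (metis (no_types, lifting) ip_smult_right ip_sum_right sum.cong)
    also have "\<dots> = 0"
      using that assms(2) by (intro sum.neutral ballI) (auto simp: coeff_eq_0 not_less)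
    finally show ?thesis .
  qed
  moreover have "s = (\<Sum>j\<le>n - 1. smult (ip s (\<phi> j)) (\<phi> j))"
    using assms(1) by (intro phi_expansion) simp
  ultimately show ?thesis using assms(1) by (simp add: deg)
qed

lemma cnj_measurable: "cnj \<in> measurable M M"
  unfolding measurable_cong_sets[OF borel borel]
  by (intro borel_measurable_continuous_onI continuous_intros)

lemma distr_cnj: "distr M M cnj = M"
proof (rule measure_eqI)
  fix A assume "A \<in> sets (distr M M cnj)"
  then have A: "A \<in> sets borel" using borel by simp
  have "cnj -` A = cnj ` A" by (force simp: image_iff intro: complex_cnj_cnj[symmetric])
  then show "emeasure (distr M M cnj) A = emeasure M A"
    using A cnj_measurable borel symm[OF A] by (simp add: emeasure_distr space_M)
qed simp

lemma ip_map_poly_cnj: "ip (map_poly cnj p) (map_poly cnj q) = ip q p"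
proof -
  let ?g = "\<lambda>z. poly q z * cnj (poly p z)"
  have "ip (map_poly cnj p) (map_poly cnj q) = integral\<^sup>L M (\<lambda>z. ?g (cnj z))"
    unfolding ip_def by (simp add: mult.commute)
  also have "\<dots> = integral\<^sup>L (distr M M cnj) ?g"
    by (rule integral_distr[symmetric, OF cnj_measurable])
      (simp add: measurable_M borel_measurable_continuous_onI continuous_intros)
  finally show ?thesis by (simp add: distr_cnj ip_def)
qed

lemma map_poly_cnj_phi: "map_poly cnj (\<phi> n) = \<phi> n"
proof (induction n rule: less_induct)
  case (less n)
  define q where "q = map_poly cnj (\<phi> n)"
  have deg_q: "degree q = n" by (simp add: q_def degree_map_poly deg)
  have "ip q (\<phi> j) = 0" if "j < n" for j
    using ip_map_poly_cnj[of "\<phi> n" "\<phi> j"] that by (simp add: q_def less.IH ip_phi)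
  then have "q = smult (ip q (\<phi> n)) (\<phi> n)"
    using phi_expansion[of q n] deg_q by (simp add: atMost_Suc_eq_insert_0 lessThan_Suc_atMost[symmetric])
  moreover have "lead_coeff q = lead_coeff (\<phi> n)"
    using lead[of n] deg_q by (simp add: q_def coeff_map_poly deg complex_eq_iff)
  ultimately have "ip q (\<phi> n) = 1"
    using lead_coeff_phi_nonzero[of n] deg_q by (metis coeff_smult deg mult_cancel_right2)
  with \<open>q = smult (ip q (\<phi> n)) (\<phi> n)\<close> show ?case by (simp add: q_def)
qed

definition psi :: "nat \<Rightarrow> real poly" where
  "psi i = map_poly Re (\<phi> i)"

lemma phi_eq_map_poly_of_real: "\<phi> i = map_poly of_real (psi i)"
proof (rule poly_eqI)
  fix k
  have "cnj (coeff (\<phi> i) k) = coeff (\<phi> i) k"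
    using arg_cong[OF map_poly_cnj_phi[of i], of "\<lambda>p. coeff p k"] by (simp add: coeff_map_poly)
  then show "coeff (\<phi> i) k = coeff (map_poly of_real (psi i)) k"
    by (simp add: psi_def coeff_map_poly complex_eq_iff)
qed

lemma poly_reflect_phi_circle:
  assumes "norm z = 1"
  shows "poly (reflect_poly (\<phi> n)) z = z ^ n * cnj (poly (\<phi> n) z)"
proof -
  have "z * cnj z = 1" using power_mult_cnj_power_circle[OF assms, of 1] by simp
  then have "inverse z = cnj z" by (rule inverse_unique)
  moreover have "z \<noteq> 0" using assms by auto
  ultimately show ?thesis
    using poly_map_poly_cnj[of "\<phi> n" z]
    by (simp add: poly_reflect_poly_nz deg map_poly_cnj_phi)
qed

lemma ip_reflect_phi_monom:
  assumes "k < n"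
  shows "ip (reflect_poly (\<phi> n)) (monom 1 (Suc k)) = 0"
proof -
  have "ip (reflect_poly (\<phi> n)) (monom 1 (Suc k)) =
        integral\<^sup>L M (\<lambda>z. cnj (poly (\<phi> n) z * cnj (poly (monom 1 (n - Suc k)) z)))"
    unfolding ip_def
  proof (rule integral_cong_circle)
    fix z :: complex assume z: "norm z = 1"
    have "z ^ n = z ^ (n - Suc k) * z ^ Suc k"
      using assms by (simp only: power_add[symmetric] Suc_leI le_add_diff_inverse2)
    moreover note power_mult_cnj_power_circle[OF z, of "Suc k"]
    ultimately show "poly (reflect_poly (\<phi> n)) z * cnj (poly (monom 1 (Suc k)) z) =
        cnj (poly (\<phi> n) z * cnj (poly (monom 1 (n - Suc k)) z))"
      by (simp add: poly_reflect_phi_circle[OF z] poly_monom algebra_simps)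
  qed (auto intro!: borel_measurable_continuous_onI continuous_intros)
  also have "\<dots> = cnj (ip (\<phi> n) (monom 1 (n - Suc k)))"
    unfolding ip_def by (rule Bochner_Integration.integral_cnj)
  also have "\<dots> = 0"
    using assms by (simp add: ip_phi_degree_less degree_monom_eq)
  finally show ?thesis .
qed

lemma ip_reflect_phi_self: "ip (reflect_poly (\<phi> n)) (reflect_poly (\<phi> n)) = 1"
proof -
  have "ip (reflect_poly (\<phi> n)) (reflect_poly (\<phi> n)) = ip (\<phi> n) (\<phi> n)"
    unfolding ip_def
  proof (rule integral_cong_circle)
    fix z :: complex assume z: "norm z = 1"
    note power_mult_cnj_power_circle[OF z, of n]
    then show "poly (reflect_poly (\<phi> n)) z * cnj (poly (reflect_poly (\<phi> n)) z) =
               poly (\<phi> n) z * cnj (poly (\<phi> n) z)"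
      by (simp add: poly_reflect_phi_circle[OF z] algebra_simps)
  qed (auto intro!: borel_measurable_continuous_onI continuous_intros)
  then show ?thesis by (simp add: ip_phi)
qed

lemma eq_smult_reflect_phi:
  assumes "degree q \<le> n" and "\<And>k. k < n \<Longrightarrow> ip q (monom 1 (Suc k)) = 0"
  shows "q = smult (coeff q 0 / lead_coeff (\<phi> n)) (reflect_poly (\<phi> n))"
proof -
  define r where "r = q - smult (coeff q 0 / lead_coeff (\<phi> n)) (reflect_poly (\<phi> n))"
  have "coeff r 0 = 0" using lead_coeff_phi_nonzero[of n] by (simp add: r_def)
  moreover obtain b s where "r = pCons b s" by (cases r)
  ultimately have r: "r = pCons 0 s" by simp
  have "degree r \<le> n"
    unfolding r_def using assms(1) degree_reflect_poly_le[of "\<phi> n"]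
    by (intro degree_diff_le) (auto simp: deg intro: degree_smult_le[THEN order_trans])
  have "s = 0"
  proof (rule ccontr)
    assume "s \<noteq> 0"
    then have "degree s < n" using \<open>degree r \<le> n\<close> r by simp
    moreover have "ip s (monom 1 k) = 0" if "k < n" for k
    proof -
      have "ip s (monom 1 k) = ip r (monom 1 (Suc k))"
        by (simp add: r monom_Suc ip_pCons_0)
      also have "\<dots> = 0"
        using assms(2)[OF that] ip_reflect_phi_monom[OF that]
        by (simp add: r_def ip_diff_left ip_smult_left)
      finally show ?thesis .
    qed
    ultimately show False using eq_0_if_orthogonal_monoms \<open>s \<noteq> 0\<close> by blast
  qed
  then show ?thesis using r by (simp add: r_def)
qed

text \<open>In terms of the Verblunsky coefficients alpha_n and rho_n = sqrt (1 - alpha_n^2),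
  a_n = 1 / rho_n and c_n = - alpha_n / rho_n.\<close>

definition szego_a :: "nat \<Rightarrow> real" where
  "szego_a n = lead_coeff (psi (Suc n)) / lead_coeff (psi n)"

definition szego_c :: "nat \<Rightarrow> real" where
  "szego_c n = coeff (psi (Suc n)) 0 / lead_coeff (psi n)"

lemma of_real_coeff_psi: "of_real (coeff (psi n) k) = coeff (\<phi> n) k"
  by (subst phi_eq_map_poly_of_real) (simp add: coeff_map_poly)

lemma degree_psi: "degree (psi n) = n"
  using deg[of n] by (metis degree_map_poly_of_real phi_eq_map_poly_of_real)

lemma of_real_szego_a: "of_real (szego_a n) = lead_coeff (\<phi> (Suc n)) / lead_coeff (\<phi> n)"
  by (simp add: szego_a_def degree_psi deg flip: of_real_coeff_psi)

lemma of_real_szego_c: "of_real (szego_c n) = coeff (\<phi> (Suc n)) 0 / lead_coeff (\<phi> n)"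
  by (simp add: szego_c_def degree_psi deg flip: of_real_coeff_psi)

lemma szego_recurrence:
  "\<phi> (Suc n) = smult (of_real (szego_a n)) (pCons 0 (\<phi> n))
                + smult (of_real (szego_c n)) (reflect_poly (\<phi> n))"
proof -
  define q where "q = \<phi> (Suc n) - smult (of_real (szego_a n)) (pCons 0 (\<phi> n))"
  have "degree q \<le> n"
  proof (rule degree_le, intro allI impI)
    fix i assume "n < i"
    then consider "i = Suc n" | "i > Suc n" by linarith
    then show "coeff q i = 0"
      by cases (use lead_coeff_phi_nonzero[of n] in \<open>simp_all add: q_def of_real_szego_a deg coeff_eq_0\<close>)
  qed
  moreover have "ip q (monom 1 (Suc k)) = 0" if "k < n" for k
    using that by (simp add: q_def ip_diff_left ip_smult_left monom_Suc ip_pCons_0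
        ip_phi_degree_less degree_monom_eq)
  ultimately have "q = smult (coeff q 0 / lead_coeff (\<phi> n)) (reflect_poly (\<phi> n))"
    by (rule eq_smult_reflect_phi)
  also have "coeff q 0 = coeff (\<phi> (Suc n)) 0" by (simp add: q_def)
  finally show ?thesis by (simp add: q_def of_real_szego_c diff_eq_eq add.commute)
qed

lemma szego_coeffs_relation: "szego_a n * szego_a n - szego_c n * szego_c n = 1"
proof -
  define a c where "a = complex_of_real (szego_a n)" and "c = complex_of_real (szego_c n)"
  define X t where "X = pCons 0 (\<phi> n)" and "t = ip X (reflect_poly (\<phi> n))"
  have rec: "\<phi> (Suc n) = smult a X + smult c (reflect_poly (\<phi> n))"
    unfolding a_def c_def X_def by (rule szego_recurrence)
  have "a \<noteq> 0"
    using lead_coeff_phi_nonzero by (simp add: a_def of_real_szego_a)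
  have orth_reflect: "ip (\<phi> (Suc n)) (reflect_poly (\<phi> n)) = 0"
    using degree_reflect_poly_le[of "\<phi> n"] by (intro ip_phi_degree_less) (simp add: deg)
  then have "a * t + c = 0"
    by (simp add: rec ip_add_left ip_smult_left ip_reflect_phi_self t_def)
  then have "t = - c / a"
    using \<open>a \<noteq> 0\<close> by (simp add: field_simps add_eq_0_iff)
  then have cnj_t: "cnj t = - c / a" by (simp add: a_def c_def)
  have "1 = ip (\<phi> (Suc n)) (\<phi> (Suc n))" by (simp add: ip_phi)
  also have "\<dots> = cnj a * ip (\<phi> (Suc n)) X"
    by (subst (2) rec) (simp add: ip_add_right ip_smult_right orth_reflect)
  also have "ip (\<phi> (Suc n)) X = a + c * cnj t"
    by (subst rec) (simp add: ip_add_left ip_smult_left X_def ip_pCons_0 ip_phi t_def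
        ip_swap[of "reflect_poly (\<phi> n)"])
  finally have "1 = a * a - c * c"
    using \<open>a \<noteq> 0\<close> by (simp add: cnj_t a_def field_simps)
  then show ?thesis by (simp add: a_def c_def flip: of_real_mult of_real_diff)
qed

lemma szego_sequence_psi: "szego_sequence psi szego_a szego_c"
proof
  fix n
  show "degree (psi n) = n" by (rule degree_psi)
  show "szego_a n * szego_a n - szego_c n * szego_c n = 1" by (rule szego_coeffs_relation)
  have "map_poly of_real (smult (szego_a n) (pCons 0 (psi n)) + smult (szego_c n) (reflect_poly (psi n)))
        = \<phi> (Suc n)"
    by (subst szego_recurrence)
      (simp add: phi_eq_map_poly_of_real[of n] reflect_poly_map_poly_of_real poly_eq_iff
        coeff_map_poly coeff_pCons split: nat.split)
  also have "\<dots> = map_poly of_real (psi (Suc n))" by (rule phi_eq_map_poly_of_real)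
  finally show "psi (Suc n) = smult (szego_a n) (pCons 0 (psi n)) + smult (szego_c n) (reflect_poly (psi n))"
    by (simp only: map_poly_of_real_inject)
qed

lemma poly_psi_0_nonzero: "poly (psi 0) x \<noteq> 0"
proof -
  obtain k where k: "psi 0 = [:k:]" using degree_psi[of 0] by (metis degree0_coeffs)
  have "of_real k = lead_coeff (\<phi> 0)" using of_real_coeff_psi[of 0 0] by (simp add: k deg)
  then show ?thesis using lead_coeff_phi_nonzero[of 0] by (auto simp: k)
qed

end

theorem theorem1p1:
  fixes M :: "complex measure" and \<phi> :: "nat \<Rightarrow> complex poly" and n :: nat and x :: real
  assumes prob: "prob_space M"
    and borel: "sets M = sets borel"
    and circle: "emeasure M (sphere 0 1) = 1"
    and symm: "\<And>A. A \<in> sets borel \<Longrightarrow> emeasure M (cnj ` A) = emeasure M A"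
    and inf_supp: "infinite (msupport M)"
    and deg: "\<And>i. degree (\<phi> i) = i"
    and lead: "\<And>i. Im (lead_coeff (\<phi> i)) = 0 \<and> Re (lead_coeff (\<phi> i)) > 0"
    and orth: "\<And>i j. integral\<^sup>L M (\<lambda>z. poly (\<phi> i) z * cnj (poly (\<phi> j) z))
                       = (if i = j then 1 else 0)"
    and n: "n \<ge> 1"
    and x: "x \<noteq> 1" "x \<noteq> -1"
    and nopole: "poly (phistar (\<phi> n)) (complex_of_real x) \<noteq> 0"
  shows "rho10 \<phi> n x = 1 / pi * sqrt (1 - (hn \<phi> n x)\<^sup>2) / \<bar>1 - x\<^sup>2\<bar>"
proof -
  interpret opuc M \<phi> by (rule opuc.intro[OF prob borel circle symm deg lead orth])
  interpret szego_sequence psi szego_a szego_c by (rule szego_sequence_psi)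
  have pole: "poly (reflect_poly (psi n)) x \<noteq> 0"
    using nopole by (simp add: phistar_def phi_eq_map_poly_of_real reflect_poly_map_poly_of_real
        poly_map_poly_of_real)
  have "1 - x * x \<noteq> 0"
    using x by (auto simp: square_eq_1_iff)
  note kac_rice = kac_rice_density_identity[OF christoffel_darboux christoffel_darboux_deriv
      christoffel_darboux_deriv2 cd_kernel_pos[of n psi, OF n poly_psi_0_nonzero] this pole]
  show ?thesis
    unfolding rho10_map_poly_of_real[OF phi_eq_map_poly_of_real]
      hn_map_poly_of_real[of \<phi> n, OF phi_eq_map_poly_of_real pole]
    by (rule kac_rice)
qed

end
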